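(* Assume the standing setup below and let $\rho\ge 0$. Suppose $\mathcal{G}$ is a quasi-concave hill (QCH) and $\mathbf{x}\in\mathcal{NE}_\rho$. Then $u_i(\mathbf{x}_i)=u_j(\mathbf{x}_j)$ for all $i,j\in\mathrm{supp}(\mathbf{x})$.
   Context: Standing setup: $\mathcal{G}=(\mathcal{V},\mathcal{E})$ is a finite, connected, undirected graph; $\mathcal{N}^i$ denotes the set of neighbours of node $i$. For $\rho\ge0$, $\mathcal{S}_\rho=\{\mathbf{x}\in\mathbb{R}^{|\mathcal{V}|}:\mathbf{x}\ge 0,\ \sum_{i\in\mathcal{V}}\mathbf{x}_i=\rho\}$, and $\mathrm{supp}(\mathbf{x})=\{i:\mathbf{x}_i\neq 0\}$. For each node $i$, $p_i:[0,\infty)\to\mathbb{R}$ is twice continuously differentiable and strictly concave, and $u_i:=p_i'$ (right derivative at $0$), so each $u_i$ is strictly decreasing. The maximum payoff density parameter (MPDP) of node $i$ is $\mathbf{a}_i:=u_i(0)$. The set of Nash equilibria is $\mathcal{NE}_\rho=\{\mathbf{x}\in\mathcal{S}_\rho: u_i(\mathbf{x}_i)\ge u_j(\mathbf{x}_j)\ \forall j\in\mathcal{N}^i,\ \forall i\in\mathrm{supp}(\mathbf{x})\}$. A path $\pi(1),\dots,\pi(n)$ in $\mathcal{G}$ (distinct nodes, consecutive ones adjacent) is a path with quasi-concave MPDP's if for all $1\le k\le m\le l\le n$, $\mathbf{a}_{\pi(m)}\ge\min\{\mathbf{a}_{\pi(k)},\mathbf{a}_{\pi(l)}\}$. $\mathcal{G}$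 is a quasi-concave hill (QCH) if between every two distinct nodes there exists a path with quasi-concave MPDP's. *)

theory Defs
  imports "HOL-Analysis.Analysis"
begin

definition undirected_graph :: "'a set \<Rightarrow> ('a \<Rightarrow> 'a \<Rightarrow> bool) \<Rightarrow> bool" where
  "undirected_graph V E \<longleftrightarrow> finite V \<and> (\<forall>i j. E i j \<longrightarrow> i \<in> V \<and> j \<in> V) \<and>
     (\<forall>i j. E i j \<longrightarrow> E j i) \<and> (\<forall>i. \<not> E i i)"

definition neighbours :: "('a \<Rightarrow> 'a \<Rightarrow> bool) \<Rightarrow> 'a \<Rightarrow> 'a set" where
  "neighbours E i = {j. E i j}"

definition is_path :: "'a set \<Rightarrow> ('a \<Rightarrow> 'a \<Rightarrow> bool) \<Rightarrow> 'a list \<Rightarrow> bool" where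
  "is_path V E \<pi> \<longleftrightarrow> \<pi> \<noteq> [] \<and> distinct \<pi> \<and> set \<pi> \<subseteq> V \<and>
     (\<forall>k. Suc k < length \<pi> \<longrightarrow> E (\<pi> ! k) (\<pi> ! Suc k))"

definition graph_connected :: "'a set \<Rightarrow> ('a \<Rightarrow> 'a \<Rightarrow> bool) \<Rightarrow> bool" where
  "graph_connected V E \<longleftrightarrow> V \<noteq> {} \<and>
     (\<forall>i\<in>V. \<forall>j\<in>V. \<exists>\<pi>. is_path V E \<pi> \<and> hd \<pi> = i \<and> last \<pi> = j)"

definition qc_path :: "('a \<Rightarrow> real) \<Rightarrow> 'a list \<Rightarrow> bool" where
  "qc_path a \<pi> \<longleftrightarrow> (\<forall>k m l. k \<le> m \<and> m \<le> l \<and> l < length \<pi> \<longrightarrow>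
      a (\<pi> ! m) \<ge> min (a (\<pi> ! k)) (a (\<pi> ! l)))"

definition quasi_concave_hill :: "'a set \<Rightarrow> ('a \<Rightarrow> 'a \<Rightarrow> bool) \<Rightarrow> ('a \<Rightarrow> real) \<Rightarrow> bool" where
  "quasi_concave_hill V E a \<longleftrightarrow> (\<forall>i\<in>V. \<forall>j\<in>V. i \<noteq> j \<longrightarrow>
      (\<exists>\<pi>. is_path V E \<pi> \<and> hd \<pi> = i \<and> last \<pi> = j \<and> qc_path a \<pi>))"

definition strictly_concave_on :: "real set \<Rightarrow> (real \<Rightarrow> real) \<Rightarrow> bool" where
  "strictly_concave_on S f \<longleftrightarrow> (\<forall>x\<in>S. \<forall>y\<in>S. \<forall>t. x \<noteq> y \<and> 0 < t \<and> t < 1 \<longrightarrow>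
      f ((1 - t) * x + t * y) > (1 - t) * f x + t * f y)"

definition strat_simplex :: "'a set \<Rightarrow> real \<Rightarrow> ('a \<Rightarrow> real) set" where
  "strat_simplex V \<rho> = {x. (\<forall>i\<in>V. x i \<ge> 0) \<and> (\<Sum>i\<in>V. x i) = \<rho>}"

definition supp :: "'a set \<Rightarrow> ('a \<Rightarrow> real) \<Rightarrow> 'a set" where
  "supp V x = {i\<in>V. x i \<noteq> 0}"

definition NE :: "'a set \<Rightarrow> ('a \<Rightarrow> 'a \<Rightarrow> bool) \<Rightarrow> ('a \<Rightarrow> real \<Rightarrow> real) \<Rightarrow> real \<Rightarrow> ('a \<Rightarrow> real) set" where
  "NE V E u \<rho> = {x\<in>strat_simplex V \<rho>. \<forall>i\<in>supp V x. \<forall>j\<in>neighbours E i. u i (x i) \<ge> u j (x j)}"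

end

theory Submission
  imports Defs
begin

text \<open>Write \<open>a\<^sub>i = u\<^sub>i(0)\<close>. Strict concavity makes every \<open>u\<^sub>i\<close> strictly decreasing, so
\<open>u\<^sub>i(x\<^sub>i) < a\<^sub>i\<close> on the support and \<open>u\<^sub>i(x\<^sub>i) = a\<^sub>i\<close> off it. Walk from \<open>i\<close> to \<open>j\<close> along a path
with quasi-concave \<open>a\<close>: while the walk stays in the support, the equilibrium condition makes
\<open>u(x)\<close> non-increasing. If it first leaves the support at \<open>k\<close>, coming from \<open>h\<close>, then
\<open>a\<^sub>k = u\<^sub>k(x\<^sub>k) \<le> u\<^sub>h(x\<^sub>h) < a\<^sub>h\<close>, so quasi-concavity forces \<open>a\<^sub>j \<le> a\<^sub>k\<close> and therefore
\<open>u\<^sub>j(x\<^sub>j) \<le> a\<^sub>j \<le> a\<^sub>k \<le> u\<^sub>i(x\<^sub>i)\<close>. Exchanging \<open>i\<close> and \<open>j\<close> gives equality.\<close>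

lemma strictly_concave_on_imp_convex_on_uminus:
  assumes "strictly_concave_on S f" and "convex S"
  shows "convex_on S (\<lambda>x. - f x)"
proof (rule convex_onI)
  fix t x y :: real
  assume "0 < t" "t < 1" "x \<in> S" "y \<in> S"
  with assms(1) have "x \<noteq> y \<Longrightarrow> f ((1 - t) * x + t * y) > (1 - t) * f x + t * f y"
    unfolding strictly_concave_on_def by blast
  moreover have "x = y \<Longrightarrow> (1 - t) * x + t * y = x"
    by (simp add: algebra_simps)
  ultimately show "- f ((1 - t) *\<^sub>R x + t *\<^sub>R y) \<le> (1 - t) * - f x + t * - f y"
    by (cases "x = y") (auto simp: algebra_simps)
qed (fact assms(2))

lemma strictly_concave_deriv_strict_antimono:
  fixes p u :: "real \<Rightarrow> real"
  assumes conc: "strictly_concave_on S p" and "convex S"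
    and deriv: "\<And>t. t \<in> S \<Longrightarrow> (p has_real_derivative u t) (at t within S)"
    and s: "s \<in> interior S" and t: "t \<in> interior S" and "s < t"
  shows "u t < u s"
proof -
  define m where "m = (s + t) / 2"
  have "m \<in> interior S"
    using convexD[OF convex_interior[OF \<open>convex S\<close>] s t, of "1/2" "1/2"]
    by (simp add: m_def add_divide_distrib)
  then have "m \<in> S" using interior_subset by blast
  have S: "s \<in> S" "t \<in> S" using s t interior_subset by blast+
  have cv: "convex_on S (\<lambda>x. - p x)"
    by (rule strictly_concave_on_imp_convex_on_uminus[OF conc \<open>convex S\<close>])
  have tangent: "- p m - - p c \<ge> - u c * (m - c)" if "c \<in> interior S" for c
    using convex_on_imp_above_tangent[OF cv convex_connected[OF \<open>convex S\<close>] that \<open>m \<in> S\<close>]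
      DERIV_minus[OF deriv] interior_subset that by blast
  have "p ((1 - 1/2) * s + 1/2 * t) > (1 - 1/2) * p s + 1/2 * p t"
    using conc[unfolded strictly_concave_on_def, rule_format, of s t "1/2"] S \<open>s < t\<close>
    by linarith
  then have "2 * p m > p s + p t"
    by (simp add: m_def field_simps)
  moreover have "p m - p s \<le> u s * ((t - s) / 2)" "p m - p t \<le> - u t * ((t - s) / 2)"
    using tangent[OF s] tangent[OF t] by (simp_all add: m_def field_simps)
  ultimately have "0 < (u s - u t) * ((t - s) / 2)"
    unfolding left_diff_distrib by linarith
  with \<open>s < t\<close> show ?thesis
    by (simp add: zero_less_mult_iff)
qed

lemma strictly_concave_deriv_less_at_0:
  fixes p u :: "real \<Rightarrow> real"
  assumes conc: "strictly_concave_on {0..} p"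
    and deriv: "\<And>t. t \<ge> 0 \<Longrightarrow> (p has_real_derivative u t) (at t within {0..})"
    and cont: "continuous (at 0 within {0..}) u"
    and "0 < t"
  shows "u t < u 0"
proof -
  have antimono: "u s' < u s" if "0 < s" "s < s'" for s s'
    using strictly_concave_deriv_strict_antimono[OF conc _ deriv] that by simp
  have "(u \<longlongrightarrow> u 0) (at_right 0)"
    using cont unfolding continuous_within by (rule tendsto_within_subset) auto
  moreover have "\<forall>\<^sub>F s in at_right 0. u (t / 2) \<le> u s"
    using eventually_at_right_real[of 0 "t / 2"] \<open>0 < t\<close>
    by (auto elim!: eventually_mono intro!: less_imp_le antimono)
  ultimately have "u (t / 2) \<le> u 0"
    by (rule tendsto_lowerbound) simp
  moreover have "u t < u (t / 2)"
    using antimono \<open>0 < t\<close> by simp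
  ultimately show ?thesis by simp
qed

lemma NE_nonneg: "x \<in> NE V E u \<rho> \<Longrightarrow> i \<in> V \<Longrightarrow> 0 \<le> x i"
  by (simp add: NE_def strat_simplex_def)

lemma NE_neighbour_le:
  "x \<in> NE V E u \<rho> \<Longrightarrow> i \<in> supp V x \<Longrightarrow> E i j \<Longrightarrow> u j (x j) \<le> u i (x i)"
  by (simp add: NE_def neighbours_def)

lemma NE_path_descent:
  assumes NE: "x \<in> NE V E u \<rho>" and path: "is_path V E \<pi>"
    and "m < length \<pi>" and "\<forall>k<m. \<pi> ! k \<in> supp V x"
  shows "u (\<pi> ! m) (x (\<pi> ! m)) \<le> u (\<pi> ! 0) (x (\<pi> ! 0))"
  using assms(3,4)
proof (induction m)
  case (Suc m)
  have "u (\<pi> ! Suc m) (x (\<pi> ! Suc m)) \<le> u (\<pi> ! m) (x (\<pi> ! m))"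
    using NE_neighbour_le[OF NE] path Suc.prems unfolding is_path_def by simp
  also have "\<dots> \<le> u (\<pi> ! 0) (x (\<pi> ! 0))"
    using Suc by simp
  finally show ?case .
qed simp

lemma NE_qc_path_le:
  assumes NE: "x \<in> NE V E u \<rho>" and path: "is_path V E \<pi>" and qc: "qc_path (\<lambda>i. u i 0) \<pi>"
    and dec: "\<And>i t. i \<in> V \<Longrightarrow> 0 < t \<Longrightarrow> u i t < u i 0"
    and hd_supp: "hd \<pi> \<in> supp V x"
  shows "u (last \<pi>) (x (last \<pi>)) \<le> u (hd \<pi>) (x (hd \<pi>))"
proof -
  define n where "n = length \<pi>"
  define w where "w k = u (\<pi> ! k) (x (\<pi> ! k))" for k
  define a where "a k = u (\<pi> ! k) 0" for k
  have "\<pi> \<noteq> []" and inV: "\<And>k. k < n \<Longrightarrow> \<pi> ! k \<in> V"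
    using path by (auto simp: is_path_def n_def)
  then have "0 < n" and hd: "hd \<pi> = \<pi> ! 0" and last: "last \<pi> = \<pi> ! (n - 1)"
    by (simp_all add: n_def hd_conv_nth last_conv_nth)
  have w_less_a: "w k < a k" if "\<pi> ! k \<in> supp V x" for k
    using that dec NE_nonneg[OF NE] by (force simp: supp_def w_def a_def)
  have w_le_a: "w k \<le> a k" if "k < n" for k
    using w_less_a[of k] inV[OF that] by (cases "\<pi> ! k \<in> supp V x") (auto simp: supp_def w_def a_def)
  show ?thesis
  proof (cases "\<forall>k<n. \<pi> ! k \<in> supp V x")
    case True
    then show ?thesis
      using NE_path_descent[OF NE path, of "n - 1"] \<open>0 < n\<close> by (simp add: n_def hd last)
  next
    case False
    then obtain k where k: "k < n" "\<pi> ! k \<notin> supp V x" and before: "\<forall>k'<k. \<pi> ! k' \<in> supp V x"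
      using exists_least_iff[of "\<lambda>k. k < n \<and> \<pi> ! k \<notin> supp V x"] by (auto dest: order.strict_trans)
    have "0 < k"
      using k(2) hd_supp hd by (cases k) auto
    have "Suc (k - 1) < length \<pi>"
      using k(1) \<open>0 < k\<close> by (simp add: n_def)
    with path have "E (\<pi> ! (k - 1)) (\<pi> ! Suc (k - 1))"
      unfolding is_path_def by blast
    then have adj: "E (\<pi> ! (k - 1)) (\<pi> ! k)"
      using \<open>0 < k\<close> by simp
    have "a k = w k"
      using k inV by (simp add: supp_def w_def a_def)
    also have "\<dots> \<le> w (k - 1)"
      using NE_neighbour_le[OF NE _ adj] before \<open>0 < k\<close> by (simp add: w_def)
    also have "\<dots> < a (k - 1)"
      using w_less_a before \<open>0 < k\<close> by simp
    finally have "a k < a (k - 1)" .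
    moreover have "min (a (k - 1)) (a (n - 1)) \<le> a k"
    proof -
      have "k - 1 \<le> k" "k \<le> n - 1" "n - 1 < length \<pi>"
        using k(1) by (simp_all add: n_def)
      then show ?thesis
        using qc unfolding qc_path_def a_def by blast
    qed
    ultimately have "a (n - 1) \<le> a k"
      by linarith
    then have "w (n - 1) \<le> w k"
      using w_le_a[of "n - 1"] \<open>0 < n\<close> \<open>a k = w k\<close> by simp
    also have "\<dots> \<le> w 0"
      using NE_path_descent[OF NE path] k(1) before by (simp add: w_def n_def)
    finally show ?thesis
      by (simp add: w_def hd last)
  qed
qed

theorem mainTheorem2:
  fixes V :: "'a set" and E :: "'a \<Rightarrow> 'a \<Rightarrow> bool"
    and p u u' :: "'a \<Rightarrow> real \<Rightarrow> real" and \<rho> :: real and x :: "'a \<Rightarrow> real"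
  assumes graph: "undirected_graph V E" and conn: "graph_connected V E"
    and p_deriv: "\<And>i t. i \<in> V \<Longrightarrow> t \<ge> 0 \<Longrightarrow> (p i has_real_derivative u i t) (at t within {0..})"
    and u_deriv: "\<And>i t. i \<in> V \<Longrightarrow> t \<ge> 0 \<Longrightarrow> (u i has_real_derivative u' i t) (at t within {0..})"
    and u'_cont: "\<And>i. i \<in> V \<Longrightarrow> continuous_on {0..} (u' i)"
    and p_conc: "\<And>i. i \<in> V \<Longrightarrow> strictly_concave_on {0..} (p i)"
    and rho: "\<rho> \<ge> 0"
    and qch: "quasi_concave_hill V E (\<lambda>i. u i 0)"
    and NE: "x \<in> NE V E u \<rho>"
  shows "\<forall>i\<in>supp V x. \<forall>j\<in>supp V x. u i (x i) = u j (x j)"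
proof -
  have dec: "u i t < u i 0" if "i \<in> V" "0 < t" for i t
    using strictly_concave_deriv_less_at_0[OF p_conc p_deriv DERIV_continuous[OF u_deriv]] that
    by simp
  have le: "u j (x j) \<le> u i (x i)" if i: "i \<in> supp V x" and j: "j \<in> supp V x" and "i \<noteq> j" for i j
  proof -
    have "i \<in> V" "j \<in> V"
      using i j by (simp_all add: supp_def)
    with qch \<open>i \<noteq> j\<close> obtain \<pi> where
      "is_path V E \<pi>" "hd \<pi> = i" "last \<pi> = j" "qc_path (\<lambda>i. u i 0) \<pi>"
      unfolding quasi_concave_hill_def by blast
    with i show ?thesis
      using NE_qc_path_le[OF NE _ _ dec, of \<pi>] by simp
  qed
  show ?thesis
    using le by (metis order.antisym)
qed

end
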